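(* Let $X,Y$ be real Banach spaces. Assume that $Y$ has octahedral norm and that there exists $f\in S_{X^*}$ such that $n(X^*,f)=1$. Let $H$ be a closed subspace of $L(X,Y)$ such that $X^*\otimes Y\subseteq H$. Then $H$ has octahedral norm.
   Context: The norm of a Banach space $Z$ is octahedral if for every finite-dimensional subspace $E$ of $Z$ and every $\varepsilon>0$ there is $y\in S_Z$ with $\|x+\lambda y\|\ge(1-\varepsilon)(\|x\|+|\lambda|)$ for all $x\in E$ and scalars $\lambda$. For a Banach space $Z$ and $u\in S_Z$, let $D(Z,u)=\{\varphi\in B_{Z^*}:\varphi(u)=1\}$ and let $n(Z,u)$ be the largest $k\ge0$ such that $k\|z\|\le\sup\{|\varphi(z)|:\varphi\in D(Z,u)\}$ for all $z\in Z$ (here applied with $Z=X^*$, $u=f$, so $\varphi$ ranges over $B_{X^{**}}$). $L(X,Y)$ is the space of bounded linear operators with operator norm; $X^*\otimes Y$ is the space of finite-rank operators spanned by $x\mapsto x^*(x)y$. *)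

theory Defs
  imports "HOL-Analysis.Analysis"
begin

definition octahedral_on :: "'z::real_normed_vector set \<Rightarrow> bool" where
  "octahedral_on Z \<longleftrightarrow>
     (\<forall>E. subspace E \<and> E \<subseteq> Z \<and> (\<exists>B. finite B \<and> E = span B) \<longrightarrow>
        (\<forall>eps>0. \<exists>y\<in>Z. norm y = 1 \<and>
           (\<forall>x\<in>E. \<forall>l::real. norm (x + l *\<^sub>R y) \<ge> (1 - eps) * (norm x + \<bar>l\<bar>))))"

definition state_set :: "'z::real_normed_vector \<Rightarrow> ('z \<Rightarrow>\<^sub>L real) set" where
  "state_set u = {\<phi>. norm \<phi> \<le> 1 \<and> blinfun_apply \<phi> u = 1}"

definition numerical_radius :: "'z::real_normed_vector \<Rightarrow> 'z \<Rightarrow> real" where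
  "numerical_radius u z = (SUP \<phi>\<in>state_set u. \<bar>blinfun_apply \<phi> z\<bar>)"

text \<open>n(Z,u): the largest k \<ge> 0 with k norm z \<le> v(z) for all z (the set of such k is a
closed interval [0, n(Z,u)], so it is its supremum).\<close>
definition numerical_index_at :: "'z::real_normed_vector \<Rightarrow> real" where
  "numerical_index_at u = Sup {k. k \<ge> 0 \<and> (\<forall>z. k * norm z \<le> numerical_radius u z)}"

definition rank_one :: "('a::real_normed_vector \<Rightarrow>\<^sub>L real) \<Rightarrow> 'b::real_normed_vector \<Rightarrow> 'a \<Rightarrow>\<^sub>L 'b" where
  "rank_one xs y = blinfun_compose (blinfun_scaleR_left y) xs"

definition tensor_ops :: "('a::real_normed_vector \<Rightarrow>\<^sub>L 'b::real_normed_vector) set" where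
  "tensor_ops = span {rank_one xs y | xs y. True}"

end

theory Submission
  imports Defs
begin

(* Given a finite-dimensional E in H and eps > 0 we produce the witness f (x) y:
   (1) the unit ball of E lies in a compact set, so its unit sphere has a finite
       delta-net T_1, ..., T_n (finite-dimensional normed spaces, first part);
   (2) n(X*,f) = 1 means every functional, hence by Hahn-Banach every operator T, almost
       attains its norm on every slice {x in B_X : f x > 1 - delta} (second and third
       part; Hahn-Banach is proved here via Zorn's lemma because the library lacks it);
   (3) choosing test points x_i in the slice with T_i x_i almost normed and y octahedral
       for span {T_i x_i}, evaluation at x_i shows that ||T + mu (f (x) y)|| is almost
       1 + |mu| for all T in the unit sphere of E (fourth part);
   (4) homogeneity extends this from the unit sphere to all of E. *)

text \<open>Norm equivalence in finite dimension, proved without coordinates.\<close>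
lemma compact_bounded_combinations:
  fixes C :: "'v::real_normed_vector set"
  assumes "finite C"
  shows "compact {\<Sum>b\<in>C. c b *\<^sub>R b | c. \<forall>b\<in>C. \<bar>c b\<bar> \<le> R}"
  using assms
proof (induction C rule: finite_induct)
  case empty
  then show ?case by simp
next
  case (insert a C)
  let ?K = "\<lambda>C. {\<Sum>b\<in>C. c b *\<^sub>R b | c. \<forall>b\<in>C. \<bar>c b\<bar> \<le> R}"
  have seg: "compact ((\<lambda>t. t *\<^sub>R a) ` {-R..R})"
    by (intro compact_continuous_image continuous_intros compact_Icc)
  have "?K (insert a C) = {x + y | x y. x \<in> (\<lambda>t. t *\<^sub>R a) ` {-R..R} \<and> y \<in> ?K C}"
  proof (intro set_eqI iffI)
    fix v assume "v \<in> ?K (insert a C)"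
    then obtain c where v: "v = (\<Sum>b\<in>insert a C. c b *\<^sub>R b)"
      and c_bd: "\<forall>b\<in>insert a C. \<bar>c b\<bar> \<le> R"
      by blast
    have "(\<Sum>b\<in>insert a C. c b *\<^sub>R b) = c a *\<^sub>R a + (\<Sum>b\<in>C. c b *\<^sub>R b)"
      using insert.hyps by simp
    then have v_eq: "v = c a *\<^sub>R a + (\<Sum>b\<in>C. c b *\<^sub>R b)" using v by simp
    show "v \<in> {x + y | x y. x \<in> (\<lambda>t. t *\<^sub>R a) ` {-R..R} \<and> y \<in> ?K C}"
    proof -
      have "c a *\<^sub>R a \<in> (\<lambda>t. t *\<^sub>R a) ` {-R..R}"
        using c_bd by (auto simp: abs_le_iff)
      moreover have "(\<Sum>b\<in>C. c b *\<^sub>R b) \<in> ?K C" using c_bd by blast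
      ultimately show ?thesis using v_eq by blast
    qed
  next
    fix v assume "v \<in> {x + y | x y. x \<in> (\<lambda>t. t *\<^sub>R a) ` {-R..R} \<and> y \<in> ?K C}"
    then obtain t c where v: "v = t *\<^sub>R a + (\<Sum>b\<in>C. c b *\<^sub>R b)" and t: "\<bar>t\<bar> \<le> R"
      and c: "\<forall>b\<in>C. \<bar>c b\<bar> \<le> R"
      by (auto simp: abs_le_iff)
    have "(\<Sum>b\<in>C. (c(a := t)) b *\<^sub>R b) = (\<Sum>b\<in>C. c b *\<^sub>R b)"
      using insert.hyps by (intro sum.cong) auto
    then have "v = (\<Sum>b\<in>insert a C. (c(a := t)) b *\<^sub>R b)"
      using insert.hyps by (simp add: v)
    moreover have "\<forall>b\<in>insert a C. \<bar>(c(a := t)) b\<bar> \<le> R" using t c by simp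
    ultimately show "v \<in> ?K (insert a C)" by blast
  qed
  then show ?case using compact_sums[OF seg insert.IH] by simp
qed

lemma coefficient_bound:
  fixes C :: "'v::real_normed_vector set"
  assumes fin: "finite C" and m: "m > 0"
    and low: "m * (\<Sum>b\<in>C. \<bar>c b\<bar>) \<le> norm (\<Sum>b\<in>C. c b *\<^sub>R b)"
    and r: "norm (\<Sum>b\<in>C. c b *\<^sub>R b) \<le> r" and b: "b \<in> C"
  shows "\<bar>c b\<bar> \<le> r / m"
proof -
  have "\<bar>c b\<bar> \<le> (\<Sum>b\<in>C. \<bar>c b\<bar>)"
    using member_le_sum[of b C "\<lambda>b. \<bar>c b\<bar>"] fin b by auto
  then have "m * \<bar>c b\<bar> \<le> r" using low r m by (meson order_trans mult_left_mono less_imp_le)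
  then show ?thesis using m by (simp add: field_simps)
qed

text \<open>Such a lower bound makes the span closed: a convergent sequence in the span has
  eventually bounded coefficients, hence lies in a compact set of combinations.\<close>
lemma closed_span_of_coefficient_bound:
  fixes C :: "'v::real_normed_vector set"
  assumes fin: "finite C" and m: "m > 0"
    and low: "\<And>c. m * (\<Sum>b\<in>C. \<bar>c b\<bar>) \<le> norm (\<Sum>b\<in>C. c b *\<^sub>R b)"
  shows "closed (span C)"
  unfolding closed_sequential_limits
proof (intro allI impI, elim conjE)
  fix s l assume s: "\<forall>n. s n \<in> span C" and lim: "s \<longlonglongrightarrow> l"
  define R where "R = (norm l + 1) / m"
  define K where "K = {\<Sum>b\<in>C. c b *\<^sub>R b | c. \<forall>b\<in>C. \<bar>c b\<bar> \<le> R}"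
  have "eventually (\<lambda>n. norm (s n) < norm l + 1) sequentially"
    using order_tendstoD(2)[OF tendsto_norm[OF lim]] by simp
  then have "eventually (\<lambda>n. s n \<in> K) sequentially"
  proof (rule eventually_mono)
    fix n assume sn: "norm (s n) < norm l + 1"
    obtain c where c: "s n = (\<Sum>b\<in>C. c b *\<^sub>R b)"
      using s span_finite[OF fin] by (metis (no_types, lifting) imageE)
    have "\<forall>b\<in>C. \<bar>c b\<bar> \<le> R"
      unfolding R_def using coefficient_bound[OF fin m low] sn c by (simp add: less_imp_le)
    then show "s n \<in> K" unfolding K_def using c by blast
  qed
  then have "l \<in> K"
    using compact_imp_closed[OF compact_bounded_combinations[OF fin]] lim
    by (intro Lim_in_closed_set[of K]) (auto simp: K_def)
  then show "l \<in> span C" unfolding K_def by (auto intro: span_sum span_scale span_base)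
qed

text \<open>Every finite independent set satisfies such a lower bound.  Induction step: the new
  vector has positive distance from the (closed) span of the others.\<close>
lemma independent_coefficient_bound:
  fixes C :: "'v::real_normed_vector set"
  assumes "finite C" "independent C"
  shows "\<exists>m>0. \<forall>c. m * (\<Sum>b\<in>C. \<bar>c b\<bar>) \<le> norm (\<Sum>b\<in>C. c b *\<^sub>R b)"
  using assms
proof (induction C rule: finite_induct)
  case empty
  then show ?case by (intro exI[of _ 1]) simp
next
  case (insert a C)
  have indC: "independent C" and aC: "a \<notin> span C"
    using insert.prems insert.hyps(2) by (auto simp: independent_insert)
  obtain m where m: "m > 0" and low: "\<And>c. m * (\<Sum>b\<in>C. \<bar>c b\<bar>) \<le> norm (\<Sum>b\<in>C. c b *\<^sub>R b)"
    using insert.IH[OF indC] by blast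
  define d where "d = infdist a (span C)"
  have d: "d > 0"
    unfolding d_def using closed_span_of_coefficient_bound[OF insert.hyps(1) m low] aC
    by (intro infdist_pos_not_in_closed) (auto intro: span_zero)
  define K where "K = 1 / d + (1 + norm a / d) / m"
  have K: "K > 0" unfolding K_def using d m by (simp add: add_pos_nonneg)
  show ?case
  proof (intro exI[of _ "1 / K"] conjI allI)
    show "1 / K > 0" using K by simp
    fix c :: "'v \<Rightarrow> real"
    define v where "v = (\<Sum>b\<in>C. c b *\<^sub>R b)"
    define t where "t = c a"
    define N where "N = norm (t *\<^sub>R a + v)"
    have vspan: "v \<in> span C" unfolding v_def by (intro span_sum span_scale span_base)
    \<comment> \<open>The coefficient of the new vector is controlled by its distance to the old span \<dots>\<close>
    have t_le: "\<bar>t\<bar> \<le> N / d"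
    proof (cases "t = 0")
      case True then show ?thesis using d by (simp add: N_def)
    next
      case False
      have "- (inverse t *\<^sub>R v) \<in> span C" using vspan by (intro span_neg span_scale)
      then have "d \<le> norm (a + inverse t *\<^sub>R v)" unfolding d_def
        using infdist_le[of "- (inverse t *\<^sub>R v)" "span C" a] by (simp add: dist_norm)
      then have "\<bar>t\<bar> * d \<le> norm (t *\<^sub>R (a + inverse t *\<^sub>R v))" by (simp add: mult_left_mono)
      also have "\<dots> = N" using False by (simp add: N_def scaleR_add_right)
      finally show ?thesis using d by (simp add: field_simps)
    qed
    have "norm v \<le> N + \<bar>t\<bar> * norm a"
      using norm_triangle_ineq4[of "t *\<^sub>R a + v" "t *\<^sub>R a"] by (simp add: N_def)
    then have "m * (\<Sum>b\<in>C. \<bar>c b\<bar>) \<le> N + N / d * norm a"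
      using low[of c] t_le by (smt (verit, best) mult_right_mono norm_ge_zero v_def)
    then have s_le: "(\<Sum>b\<in>C. \<bar>c b\<bar>) \<le> (N + N / d * norm a) / m"
      using m by (simp add: field_simps)
    have "(\<Sum>b\<in>insert a C. \<bar>c b\<bar>) \<le> N / d + (N + N / d * norm a) / m"
      using insert.hyps t_le s_le by (simp add: t_def)
    also have "\<dots> = K * N" unfolding K_def by (simp add: field_simps)
    finally have "(\<Sum>b\<in>insert a C. \<bar>c b\<bar>) \<le> K * N" .
    moreover have "(\<Sum>b\<in>insert a C. c b *\<^sub>R b) = t *\<^sub>R a + v"
      using insert.hyps by (simp add: v_def t_def)
    ultimately show "1 / K * (\<Sum>b\<in>insert a C. \<bar>c b\<bar>) \<le> norm (\<Sum>b\<in>insert a C. c b *\<^sub>R b)"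
      using K by (simp add: N_def field_simps)
  qed
qed

lemma span_unit_ball_in_compact:
  fixes B :: "'v::real_normed_vector set"
  assumes finB: "finite B"
  shows "\<exists>K. compact K \<and> {x \<in> span B. norm x \<le> 1} \<subseteq> K"
proof -
  obtain C where CB: "C \<subseteq> B" and indC: "independent C" and BC: "B \<subseteq> span C"
    by (rule maximal_independent_subset[of B])
  have finC: "finite C" using finite_subset[OF CB finB] .
  have span_eq: "span B = span C"
    using CB BC by (metis span_mono span_span subset_antisym)
  obtain m where m: "m > 0" and low: "\<And>c. m * (\<Sum>b\<in>C. \<bar>c b\<bar>) \<le> norm (\<Sum>b\<in>C. c b *\<^sub>R b)"
    using independent_coefficient_bound[OF finC indC] by blast
  have "{x \<in> span B. norm x \<le> 1} \<subseteq> {\<Sum>b\<in>C. c b *\<^sub>R b | c. \<forall>b\<in>C. \<bar>c b\<bar> \<le> 1 / m}"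
  proof clarify
    fix x assume x: "x \<in> span B" "norm x \<le> 1"
    obtain c where c: "x = (\<Sum>b\<in>C. c b *\<^sub>R b)"
      using x(1) span_eq span_finite[OF finC] by (metis (no_types, lifting) imageE)
    then have "\<forall>b\<in>C. \<bar>c b\<bar> \<le> 1 / m" using coefficient_bound[OF finC m low] x(2) by simp
    then show "\<exists>c. x = (\<Sum>b\<in>C. c b *\<^sub>R b) \<and> (\<forall>b\<in>C. \<bar>c b\<bar> \<le> 1 / m)" using c by blast
  qed
  then show ?thesis using compact_bounded_combinations[OF finC] by blast
qed

text \<open>Hahn-Banach via Zorn's lemma.  A partial functional dominated by the norm and
  norming v is represented by its graph, a subspace of Y \<times> R.\<close>
definition dominated_graphs :: "'b::real_normed_vector \<Rightarrow> ('b \<times> real) set set" where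
  "dominated_graphs v = {G. subspace G \<and> (\<forall>x a b. (x, a) \<in> G \<longrightarrow> (x, b) \<in> G \<longrightarrow> a = b)
      \<and> (\<forall>x a. (x, a) \<in> G \<longrightarrow> a \<le> norm x) \<and> (v, norm v) \<in> G}"

lemma dominated_graphs_line: "span {(v, norm v)} \<in> dominated_graphs v"
proof -
  have span: "span {(v, norm v)} = {(t *\<^sub>R v, t * norm v) | t. True}"
    by (auto simp: span_singleton)
  have "a = b" if xa: "(x, a) \<in> span {(v, norm v)}" and xb: "(x, b) \<in> span {(v, norm v)}"
    for x a b
  proof -
    obtain s where s: "x = s *\<^sub>R v" "a = s * norm v" using xa unfolding span by blast
    obtain t where t: "x = t *\<^sub>R v" "b = t * norm v" using xb unfolding span by blast
    note st = s t
    show ?thesis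
    proof (cases "v = 0")
      case False
      then have "s = t" using st by (metis scaleR_cancel_right)
      then show ?thesis using st by simp
    qed (use st in simp)
  qed
  moreover have "a \<le> norm x" if "(x, a) \<in> span {(v, norm v)}" for x a
    using that unfolding span by (auto simp: mult_right_mono)
  ultimately show ?thesis unfolding dominated_graphs_def by (auto intro: span_base)
qed

lemma dominated_graphs_chain:
  assumes C: "C \<in> chains (dominated_graphs v)" and ne: "C \<noteq> {}"
  shows "\<Union>C \<in> dominated_graphs v"
proof -
  have P: "\<And>X. X \<in> C \<Longrightarrow> subspace X \<and> (\<forall>x a b. (x, a) \<in> X \<longrightarrow> (x, b) \<in> X \<longrightarrow> a = b)
      \<and> (\<forall>x a. (x, a) \<in> X \<longrightarrow> a \<le> norm x) \<and> (v, norm v) \<in> X"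
    using C unfolding chains_def dominated_graphs_def by blast
  have common: "\<exists>Z\<in>C. p \<in> Z \<and> q \<in> Z" if "p \<in> \<Union>C" "q \<in> \<Union>C" for p q
    using that C unfolding chains_def chain_subset_def by blast
  obtain X0 where X0: "X0 \<in> C" using ne by blast
  have "subspace (\<Union>C)"
    unfolding subspace_def
  proof (intro conjI ballI allI)
    show "0 \<in> \<Union>C" using X0 P[OF X0] subspace_0 by blast
    show "x + y \<in> \<Union>C" if "x \<in> \<Union>C" "y \<in> \<Union>C" for x y
      using common[OF that] P subspace_add by blast
    show "c *\<^sub>R x \<in> \<Union>C" if "x \<in> \<Union>C" for c x
      using that P subspace_scale by blast
  qed
  moreover have "a = b" if "(x, a) \<in> \<Union>C" "(x, b) \<in> \<Union>C" for x a b
    using common[OF that] P by blast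
  ultimately show ?thesis unfolding dominated_graphs_def using X0 P by blast
qed

text \<open>The one-step extension in the proof of Hahn-Banach: a constant c between the two
  families of bounds exists because the norm is subadditive.\<close>
lemma dominated_graph_extension_constant:
  assumes M: "M \<in> dominated_graphs v"
  shows "\<exists>c. (\<forall>x a. (x, a) \<in> M \<longrightarrow> a - norm (x - z) \<le> c)
           \<and> (\<forall>y b. (y, b) \<in> M \<longrightarrow> c \<le> norm (y + z) - b)"
proof -
  have subM: "subspace M" and bM: "\<And>x a. (x, a) \<in> M \<Longrightarrow> a \<le> norm x"
    using M unfolding dominated_graphs_def by blast+
  have sep: "a - norm (x - z) \<le> norm (y + z) - b" if "(x, a) \<in> M" "(y, b) \<in> M" for x y a b
  proof -
    have "a + b \<le> norm (x + y)" using bM subspace_add[OF subM that] by simp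
    also have "\<dots> \<le> norm (x - z) + norm (y + z)"
      using norm_triangle_ineq[of "x - z" "y + z"] by simp
    finally show ?thesis by simp
  qed
  define L where "L = {a - norm (x - z) | x a. (x, a) \<in> M}"
  have zero: "(0, 0) \<in> M" using subspace_0[OF subM] by (simp add: zero_prod_def)
  have "L \<noteq> {}" "bdd_above L"
    using zero sep[OF _ zero] unfolding L_def bdd_above_def by force+
  then show ?thesis
    using sep by (intro exI[of _ "Sup L"]) (auto intro!: cSup_upper cSup_least simp: L_def)
qed

lemma dominated_graph_extension_bound:
  assumes subM: "subspace M" and bM: "\<And>x a. (x, a) \<in> M \<Longrightarrow> a \<le> norm x"
    and lo: "\<And>x a. (x, a) \<in> M \<Longrightarrow> a - norm (x - z) \<le> c"
    and hi: "\<And>y b. (y, b) \<in> M \<Longrightarrow> c \<le> norm (y + z) - b"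
    and xa: "(x, a) \<in> M"
  shows "a + t * c \<le> norm (x + t *\<^sub>R z)"
proof -
  have scM: "(r *\<^sub>R x, r * a) \<in> M" for r
    using subspace_scale[OF subM xa, of r] by simp
  consider "t = 0" | "t > 0" | "t < 0" by linarith
  then show ?thesis
  proof cases
    case 1
    then show ?thesis using bM[OF xa] by simp
  next
    case 2
    have "t * c \<le> t * (norm (inverse t *\<^sub>R x + z) - inverse t * a)"
      using hi[OF scM[of "inverse t"]] 2 by (intro mult_left_mono) auto
    also have "\<dots> = norm (t *\<^sub>R (inverse t *\<^sub>R x + z)) - a"
      using 2 by (simp add: right_diff_distrib)
    also have "\<dots> = norm (x + t *\<^sub>R z) - a"
      using 2 by (simp add: scaleR_add_right)
    finally show ?thesis by simp
  next
    case 3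
    have "(- t) * (inverse (- t) * a - norm (inverse (- t) *\<^sub>R x - z)) \<le> (- t) * c"
      using lo[OF scM[of "inverse (- t)"]] 3 by (intro mult_left_mono) auto
    also have "(- t) * (inverse (- t) * a - norm (inverse (- t) *\<^sub>R x - z))
        = a - norm ((- t) *\<^sub>R (inverse (- t) *\<^sub>R x - z))"
      using 3 by (simp add: right_diff_distrib)
    also have "(- t) *\<^sub>R (inverse (- t) *\<^sub>R x - z) = x + t *\<^sub>R z"
      using 3 by (simp add: scaleR_diff_right)
    finally show ?thesis by simp
  qed
qed

lemma dominated_graph_extend:
  assumes M: "M \<in> dominated_graphs v" and nz: "\<And>a. (z, a) \<notin> M"
  shows "\<exists>M'\<in>dominated_graphs v. M \<subset> M'"
proof -
  have subM: "subspace M" and fnM: "\<And>x a b. (x, a) \<in> M \<Longrightarrow> (x, b) \<in> M \<Longrightarrow> a = b"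
    and bM: "\<And>x a. (x, a) \<in> M \<Longrightarrow> a \<le> norm x" and vM: "(v, norm v) \<in> M"
    using M unfolding dominated_graphs_def by blast+
  obtain c where lo: "\<And>x a. (x, a) \<in> M \<Longrightarrow> a - norm (x - z) \<le> c"
    and hi: "\<And>y b. (y, b) \<in> M \<Longrightarrow> c \<le> norm (y + z) - b"
    using dominated_graph_extension_constant[OF M, of z] by blast
  define M' where "M' = span (insert (z, c) M)"
  have mem: "(w, a) \<in> M' \<longleftrightarrow> (\<exists>t. (w - t *\<^sub>R z, a - t * c) \<in> M)" for w a
  proof -
    have spanM: "span M = M" using subM by simp
    show ?thesis unfolding M'_def span_insert spanM by simp
  qed
  have "a = b" if wa: "(w, a) \<in> M'" and wb: "(w, b) \<in> M'" for w a b
  proof -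
    obtain t where t: "(w - t *\<^sub>R z, a - t * c) \<in> M" using wa mem by blast
    obtain s where s: "(w - s *\<^sub>R z, b - s * c) \<in> M" using wb mem by blast
    have diff: "((s - t) *\<^sub>R z, (a - t * c) - (b - s * c)) \<in> M"
      using subspace_diff[OF subM t s] by (simp add: algebra_simps)
    have "s = t"
    proof (rule ccontr)
      assume "s \<noteq> t"
      then have "(z, inverse (s - t) * ((a - t * c) - (b - s * c))) \<in> M"
        using subspace_scale[OF subM diff, of "inverse (s - t)"] by simp
      then show False using nz by blast
    qed
    then show ?thesis using fnM t s by fastforce
  qed
  moreover have "a \<le> norm w" if wa: "(w, a) \<in> M'" for w a
  proof -
    obtain t where t: "(w - t *\<^sub>R z, a - t * c) \<in> M" using wa mem by blast
    show ?thesis using dominated_graph_extension_bound[OF subM bM lo hi t, of t] by simp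
  qed
  moreover have "M \<subset> M'"
    using nz[of c] span_superset[of "insert (z, c) M"] unfolding M'_def by blast
  ultimately show ?thesis
    unfolding dominated_graphs_def using vM by (intro bexI[of _ M']) (auto simp: M'_def)
qed

lemma norming_functional:
  fixes v :: "'b::real_normed_vector"
  shows "\<exists>g::'b \<Rightarrow>\<^sub>L real. norm g \<le> 1 \<and> blinfun_apply g v = norm v"
proof -
  have "\<forall>C\<in>chains (dominated_graphs v). \<exists>U\<in>dominated_graphs v. \<forall>X\<in>C. X \<subseteq> U"
    using dominated_graphs_line dominated_graphs_chain by (metis Sup_upper empty_iff)
  then obtain M where M: "M \<in> dominated_graphs v"
    and max: "\<And>X. X \<in> dominated_graphs v \<Longrightarrow> M \<subseteq> X \<Longrightarrow> X = M"
    using Zorn_Lemma2 by force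
  have subM: "subspace M" and fnM: "\<And>x a b. (x, a) \<in> M \<Longrightarrow> (x, b) \<in> M \<Longrightarrow> a = b"
    and bM: "\<And>x a. (x, a) \<in> M \<Longrightarrow> a \<le> norm x" and vM: "(v, norm v) \<in> M"
    using M unfolding dominated_graphs_def by blast+
  have total: "\<exists>a. (z, a) \<in> M" for z
    using dominated_graph_extend[OF M, of z] max by blast
  define h where "h z = (THE a. (z, a) \<in> M)" for z
  have hM: "(z, h z) \<in> M" for z
    unfolding h_def using total[of z] fnM by (metis theI)
  have hval: "h z = a" if "(z, a) \<in> M" for z a
    using fnM[OF hM that] .
  have hadd: "h (x + y) = h x + h y" for x y
    using subspace_add[OF subM hM[of x] hM[of y]] hval by simp
  have hsc: "h (r *\<^sub>R x) = r *\<^sub>R h x" for r x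
    using subspace_scale[OF subM hM[of x], of r] hval by simp
  have hb: "norm (h x) \<le> norm x * 1" for x
    using bM[OF hM[of x]] bM[OF hM[of "-x"]] hsc[of "-1" x] by simp
  have bl: "bounded_linear h" by (rule bounded_linear_intro[OF hadd hsc hb])
  then have "norm (Blinfun h) \<le> 1"
    using hb by (intro norm_blinfun_bound) (auto simp: bounded_linear_Blinfun_apply)
  moreover have "blinfun_apply (Blinfun h) v = norm v"
    using bl hval[OF vM] by (simp add: bounded_linear_Blinfun_apply)
  ultimately show ?thesis by blast
qed

lemma norm_blinfun_apply_unit_ball:
  fixes T :: "'a::real_normed_vector \<Rightarrow>\<^sub>L 'c::real_normed_vector"
  assumes "norm x \<le> 1"
  shows "norm (blinfun_apply T x) \<le> norm T"
  using norm_blinfun[of T x] mult_left_le[OF assms, of "norm T"] by simp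

lemma norm_blinfun_apply_contraction:
  fixes T :: "'a::real_normed_vector \<Rightarrow>\<^sub>L 'c::real_normed_vector"
  assumes "norm T \<le> 1"
  shows "norm (blinfun_apply T x) \<le> norm x"
  using norm_blinfun[of T x] mult_left_le_one_le[OF _ _ assms, of "norm x"] by simp

lemma norm_blinfun_le_on_unit_ball:
  fixes g :: "'a::real_normed_vector \<Rightarrow>\<^sub>L 'c::real_normed_vector"
  assumes M: "0 \<le> M" and bound: "\<And>x. norm x \<le> 1 \<Longrightarrow> norm (blinfun_apply g x) \<le> M"
  shows "norm g \<le> M"
proof (rule norm_blinfun_bound[OF M])
  fix x :: 'a
  show "norm (blinfun_apply g x) \<le> M * norm x"
  proof (cases "x = 0")
    case False
    then have "norm (blinfun_apply g (inverse (norm x) *\<^sub>R x)) \<le> M" by (intro bound) simp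
    then show ?thesis using False by (simp add: blinfun.scaleR_right field_simps)
  qed simp
qed

lemma norm_functional_le_on_unit_ball:
  fixes g :: "'a::real_normed_vector \<Rightarrow>\<^sub>L real"
  assumes M: "0 \<le> M" and bound: "\<And>x. norm x \<le> 1 \<Longrightarrow> blinfun_apply g x \<le> M"
  shows "norm g \<le> M"
proof (rule norm_blinfun_le_on_unit_ball[OF M])
  fix x :: 'a assume x: "norm x \<le> 1"
  show "norm (blinfun_apply g x) \<le> M"
    using bound[OF x] bound[of "- x"] x by (simp add: blinfun.minus_right)
qed

lemma blinfun_almost_attains_norm:
  fixes g :: "'a::real_normed_vector \<Rightarrow>\<^sub>L 'c::real_normed_vector"
  assumes "c < norm g"
  shows "\<exists>x. norm x \<le> 1 \<and> c < norm (blinfun_apply g x)"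
proof (rule ccontr)
  assume "\<not> ?thesis"
  then have bound: "\<And>x. norm x \<le> 1 \<Longrightarrow> norm (blinfun_apply g x) \<le> c" by force
  then have "0 \<le> c" using bound[of 0] by simp
  then have "norm g \<le> c" using norm_blinfun_le_on_unit_ball bound by blast
  then show False using assms by simp
qed

lemma state_set_nonempty:
  fixes u :: "'z::real_normed_vector"
  assumes "norm u = 1"
  shows "state_set u \<noteq> {}"
  using norming_functional[of u] assms unfolding state_set_def by auto

lemma numerical_radius_le:
  assumes "state_set u \<noteq> {}" and "\<And>\<phi>. \<phi> \<in> state_set u \<Longrightarrow> \<bar>blinfun_apply \<phi> z\<bar> \<le> c"
  shows "numerical_radius u z \<le> c"
  unfolding numerical_radius_def using assms by (intro cSUP_least) auto

text \<open>Numerical index one at u means that the numerical radius dominates the norm: the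
  supremum 1 of the admissible constants k is approached from below.\<close>
lemma numerical_radius_ge_norm:
  fixes u :: "'z::real_normed_vector"
  assumes nu: "norm u = 1" and idx: "numerical_index_at u = 1"
  shows "norm z \<le> numerical_radius u z"
proof -
  define K where "K = {k. k \<ge> 0 \<and> (\<forall>z. k * norm z \<le> numerical_radius u z)}"
  have nonempty: "state_set u \<noteq> {}" using state_set_nonempty[OF nu] .
  have state_le: "\<bar>blinfun_apply \<phi> z\<bar> \<le> norm z" if "\<phi> \<in> state_set u" for \<phi> z
    using that norm_blinfun_apply_contraction[of \<phi> z] unfolding state_set_def by simp
  have radius_le: "numerical_radius u z \<le> norm z" for z
    using state_le nonempty by (intro numerical_radius_le)
  have radius_nonneg: "0 \<le> numerical_radius u z" for z
  proof -
    obtain \<phi> where \<phi>: "\<phi> \<in> state_set u" using nonempty by blast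
    have "bdd_above ((\<lambda>\<phi>. \<bar>blinfun_apply \<phi> z\<bar>) ` state_set u)"
      using state_le by (intro bdd_aboveI2[of _ _ "norm z"])
    then have "\<bar>blinfun_apply \<phi> z\<bar> \<le> numerical_radius u z"
      unfolding numerical_radius_def using \<phi> by (rule cSUP_upper2) simp
    then show ?thesis by simp
  qed
  have "K \<noteq> {}" using radius_nonneg unfolding K_def by force
  moreover have "bdd_above K"
  proof (rule bdd_aboveI)
    fix k assume "k \<in> K"
    then have "k * norm u \<le> numerical_radius u u" unfolding K_def by blast
    then show "k \<le> 1" using radius_le[of u] nu by simp
  qed
  moreover have "Sup K = 1" using idx unfolding numerical_index_at_def K_def .
  ultimately have approx: "\<exists>k\<in>K. w < k" if "w < 1" for w
    using that less_cSup_iff[of K w] by simp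
  show ?thesis
  proof (rule field_le_mult_one_interval)
    fix w :: real assume "0 < w" "w < 1"
    then obtain k where k: "k \<in> K" "w < k" using approx by blast
    have "w * norm z \<le> k * norm z" using k(2) by (intro mult_right_mono) auto
    also have "\<dots> \<le> numerical_radius u z" using k(1) unfolding K_def by blast
    finally show "w * norm z \<le> numerical_radius u z" .
  qed
qed

definition slice :: "('a::real_normed_vector \<Rightarrow>\<^sub>L real) \<Rightarrow> real \<Rightarrow> 'a set" where
  "slice f \<delta> = {x. norm x \<le> 1 \<and> blinfun_apply f x > 1 - \<delta>}"

text \<open>Key observation: if a functional g is at most c on the slice, then every state
  \<phi> \<in> D(X*, f) satisfies \<phi> g \<le> c.  Indeed g + t f has norm at most c + t for large t,
  while \<phi> (g + t f) = \<phi> g + t.\<close>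
lemma state_bounded_by_slice:
  fixes f g :: "'a::real_normed_vector \<Rightarrow>\<^sub>L real"
  assumes nf: "norm f = 1" and \<phi>: "\<phi> \<in> state_set f" and \<delta>: "\<delta> > 0" and c: "c \<ge> 0"
    and bound: "\<And>x. x \<in> slice f \<delta> \<Longrightarrow> blinfun_apply g x \<le> c"
  shows "blinfun_apply \<phi> g \<le> c"
proof -
  define t where "t = (norm g + 1) / \<delta>"
  have t: "t > 0" "t * \<delta> = norm g + 1" unfolding t_def using \<delta> by (auto simp: add_nonneg_pos)
  have "norm (g + t *\<^sub>R f) \<le> c + t"
  proof (rule norm_functional_le_on_unit_ball)
    show "0 \<le> c + t" using c t by simp
    fix x :: 'a assume x: "norm x \<le> 1"
    have fx: "blinfun_apply f x \<le> 1"
      using norm_blinfun_apply_unit_ball[OF x, of f] nf by simp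
    have gx: "blinfun_apply g x \<le> norm g"
      using norm_blinfun_apply_unit_ball[OF x, of g] by simp
    show "blinfun_apply (g + t *\<^sub>R f) x \<le> c + t"
    proof (cases "x \<in> slice f \<delta>")
      case True
      have "t * blinfun_apply f x \<le> t" using fx t mult_left_le[of "blinfun_apply f x" t] by simp
      then show ?thesis using bound[OF True] by (simp add: blinfun.add_left blinfun.scaleR_left)
    next
      case False
      then have "t * blinfun_apply f x \<le> t * (1 - \<delta>)"
        using t x unfolding slice_def by (intro mult_left_mono) auto
      then show ?thesis using gx c t by (simp add: blinfun.add_left blinfun.scaleR_left algebra_simps)
    qed
  qed
  moreover have "blinfun_apply \<phi> (g + t *\<^sub>R f) \<le> norm (g + t *\<^sub>R f)"
    using \<phi> norm_blinfun_apply_contraction[of \<phi> "g + t *\<^sub>R f"] unfolding state_set_def by simp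
  ultimately have "blinfun_apply \<phi> (g + t *\<^sub>R f) \<le> c + t" by linarith
  then show ?thesis
    using \<phi> unfolding state_set_def by (simp add: blinfun.add_right blinfun.scaleR_right)
qed

lemma functional_large_on_slice:
  fixes f g :: "'a::real_normed_vector \<Rightarrow>\<^sub>L real"
  assumes nf: "norm f = 1" and idx: "numerical_index_at f = 1" and \<delta>: "\<delta> > 0"
    and c: "c \<ge> 0" and g: "c < norm g"
  shows "\<exists>x\<in>slice f \<delta>. \<bar>blinfun_apply g x\<bar> > c"
proof (rule ccontr)
  assume "\<not> ?thesis"
  then have bound: "\<And>x. x \<in> slice f \<delta> \<Longrightarrow> \<bar>blinfun_apply g x\<bar> \<le> c" by force
  have "\<bar>blinfun_apply \<phi> g\<bar> \<le> c" if \<phi>: "\<phi> \<in> state_set f" for \<phi>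
    using state_bounded_by_slice[OF nf \<phi> \<delta> c, of g] state_bounded_by_slice[OF nf \<phi> \<delta> c, of "- g"]
      bound by (force simp: blinfun.minus_left blinfun.minus_right)
  then have "numerical_radius f g \<le> c"
    using state_set_nonempty[OF nf] by (intro numerical_radius_le)
  then show False using numerical_radius_ge_norm[OF nf idx, of g] g by simp
qed

text \<open>The same for operators: compose with a functional norming a value of almost maximal
  norm.\<close>
lemma operator_large_on_slice:
  fixes f :: "'a::real_normed_vector \<Rightarrow>\<^sub>L real" and T :: "'a \<Rightarrow>\<^sub>L 'b::real_normed_vector"
  assumes nf: "norm f = 1" and idx: "numerical_index_at f = 1" and \<delta>: "\<delta> > 0"
  shows "\<exists>x\<in>slice f \<delta>. norm (blinfun_apply T x) > norm T - \<delta>"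
proof (cases "norm T < \<delta>")
  case True
  obtain x where "x \<in> slice f \<delta>"
    using functional_large_on_slice[OF nf idx \<delta>, of 0 f] nf by auto
  moreover have "norm T - \<delta> < norm (blinfun_apply T x)"
    using True norm_ge_zero[of "blinfun_apply T x"] by linarith
  ultimately show ?thesis by blast
next
  case False
  obtain x0 where x0: "norm x0 \<le> 1" "norm T - \<delta> < norm (blinfun_apply T x0)"
    using blinfun_almost_attains_norm[of "norm T - \<delta>" T] \<delta> by auto
  obtain g :: "'b \<Rightarrow>\<^sub>L real"
    where g: "norm g \<le> 1" "blinfun_apply g (blinfun_apply T x0) = norm (blinfun_apply T x0)"
    using norming_functional by blast
  have "norm (blinfun_apply T x0) \<le> norm (g o\<^sub>L T)"
    using g norm_blinfun_apply_unit_ball[OF x0(1), of "g o\<^sub>L T"] by simp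
  then obtain x where x: "x \<in> slice f \<delta>" "\<bar>blinfun_apply (g o\<^sub>L T) x\<bar> > norm T - \<delta>"
    using functional_large_on_slice[OF nf idx \<delta>, of "norm T - \<delta>" "g o\<^sub>L T"] False x0 by auto
  have "\<bar>blinfun_apply (g o\<^sub>L T) x\<bar> \<le> norm (blinfun_apply T x)"
    using norm_blinfun_apply_contraction[OF g(1)] by simp
  then show ?thesis using x by (meson less_le_trans)
qed

lemma rank_one_apply: "blinfun_apply (rank_one f y) x = blinfun_apply f x *\<^sub>R y"
  by (simp add: rank_one_def)

lemma norm_rank_one: "norm (rank_one f y) = norm f * norm y"
proof (rule antisym)
  show "norm (rank_one f y) \<le> norm f * norm y"
  proof (rule norm_blinfun_bound)
    fix x
    have "norm (blinfun_apply f x) * norm y \<le> norm f * norm x * norm y"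
      using norm_blinfun[of f x] by (simp add: mult_right_mono)
    then show "norm (blinfun_apply (rank_one f y) x) \<le> norm f * norm y * norm x"
      by (simp add: rank_one_apply mult_ac)
  qed simp
  show "norm f * norm y \<le> norm (rank_one f y)"
  proof (cases "y = 0")
    case False
    have "norm f \<le> norm (rank_one f y) / norm y"
    proof (rule norm_blinfun_bound)
      fix x
      have "norm (blinfun_apply f x) * norm y \<le> norm (rank_one f y) * norm x"
        using norm_blinfun[of "rank_one f y" x] by (simp add: rank_one_apply)
      then show "norm (blinfun_apply f x) \<le> norm (rank_one f y) / norm y * norm x"
        using False by (simp add: field_simps)
    qed simp
    then show ?thesis using False by (simp add: field_simps)
  qed simp
qed

lemma octahedral_onD:
  assumes "octahedral_on Z" and "finite B" "span B \<subseteq> Z" and "eps > 0"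
  shows "\<exists>y\<in>Z. norm y = 1 \<and> (\<forall>x\<in>span B. \<forall>l. (1 - eps) * (norm x + \<bar>l\<bar>) \<le> norm (x + l *\<^sub>R y))"
proof -
  have "subspace (span B) \<and> span B \<subseteq> Z \<and> (\<exists>B'. finite B' \<and> span B = span B')"
    using assms(2,3) by auto
  then show ?thesis using assms(1,4) unfolding octahedral_on_def by blast
qed

lemma octahedral_onI_unit_sphere:
  fixes Z :: "'z::real_normed_vector set"
  assumes unit: "\<And>E eps. subspace E \<Longrightarrow> E \<subseteq> Z \<Longrightarrow> (\<exists>B. finite B \<and> E = span B) \<Longrightarrow> eps > 0 \<Longrightarrow>
      \<exists>y\<in>Z. norm y = 1 \<and> (\<forall>x\<in>E. norm x = 1 \<longrightarrow> (\<forall>l. (1 - eps) * (1 + \<bar>l\<bar>) \<le> norm (x + l *\<^sub>R y)))"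
  shows "octahedral_on Z"
  unfolding octahedral_on_def
proof (intro allI impI ballI)
  fix E :: "'z set" and eps :: real
  assume E: "subspace E \<and> E \<subseteq> Z \<and> (\<exists>B. finite B \<and> E = span B)" and eps: "eps > 0"
  then obtain y where y: "y \<in> Z" "norm y = 1"
    and oct: "\<And>x l. x \<in> E \<Longrightarrow> norm x = 1 \<Longrightarrow> (1 - eps) * (1 + \<bar>l\<bar>) \<le> norm (x + l *\<^sub>R y)"
    using unit[of E eps] by blast
  have "(1 - eps) * (norm x + \<bar>l\<bar>) \<le> norm (x + l *\<^sub>R y)" if x: "x \<in> E" for x l
  proof (cases "x = 0")
    case True
    then show ?thesis using eps y(2) mult_right_mono[of "1 - eps" 1 "\<bar>l\<bar>"] by simp
  next
    case False
    define r where "r = norm x"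
    have r: "r > 0" using False by (simp add: r_def)
    have "inverse r *\<^sub>R x \<in> E" using E x by (simp add: subspace_scale)
    moreover have "norm (inverse r *\<^sub>R x) = 1" using r by (simp add: r_def)
    ultimately have "(1 - eps) * (1 + \<bar>l / r\<bar>) \<le> norm (inverse r *\<^sub>R x + (l / r) *\<^sub>R y)"
      by (rule oct)
    then have "r * ((1 - eps) * (1 + \<bar>l / r\<bar>)) \<le> r * norm (inverse r *\<^sub>R x + (l / r) *\<^sub>R y)"
      using r by (simp add: mult_left_mono)
    also have "r * norm (inverse r *\<^sub>R x + (l / r) *\<^sub>R y) = norm (x + l *\<^sub>R y)"
      using r by (simp add: scaleR_add_right flip: norm_scaleR[of r, unfolded abs_of_pos[OF r]])
    also have "r * ((1 - eps) * (1 + \<bar>l / r\<bar>)) = (1 - eps) * (norm x + \<bar>l\<bar>)"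
      using r by (simp add: r_def abs_divide field_simps)
    finally show ?thesis .
  qed
  then show "\<exists>y\<in>Z. norm y = 1 \<and> (\<forall>x\<in>E. \<forall>l. (1 - eps) * (norm x + \<bar>l\<bar>) \<le> norm (x + l *\<^sub>R y))"
    using y by blast
qed

lemma norm_lower_bound_at_test_point:
  fixes T T0 S :: "'a::real_normed_vector \<Rightarrow>\<^sub>L 'b::real_normed_vector"
  assumes x: "norm x \<le> 1" and close: "norm (T - T0) < \<delta>"
    and large: "1 - 2 * \<delta> \<le> norm (blinfun_apply T0 x)"
    and Sx: "blinfun_apply S x = s *\<^sub>R y" and s: "1 - \<delta> \<le> \<bar>s\<bar>"
    and oct: "\<And>l. (1 - \<delta>) * (norm (blinfun_apply T0 x) + \<bar>l\<bar>)
                    \<le> norm (blinfun_apply T0 x + l *\<^sub>R y)"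
    and \<delta>: "0 \<le> \<delta>" "\<delta> \<le> 1"
  shows "(1 - 4 * \<delta>) * (1 + \<bar>\<mu>\<bar>) \<le> norm (T + \<mu> *\<^sub>R S)"
proof -
  define u where "u = blinfun_apply T0 x"
  define l where "l = \<mu> * s"
  have split: "blinfun_apply (T + \<mu> *\<^sub>R S) x = (u + l *\<^sub>R y) + blinfun_apply (T - T0) x"
    by (simp add: Sx u_def l_def blinfun.diff_left blinfun.add_left blinfun.scaleR_left algebra_simps)
  have "norm (blinfun_apply (T - T0) x) < \<delta>"
    using norm_blinfun_apply_unit_ball[OF x, of "T - T0"] close by simp
  then have "norm (u + l *\<^sub>R y) - \<delta> \<le> norm (blinfun_apply (T + \<mu> *\<^sub>R S) x)"
    unfolding split using norm_triangle_ineq2[of "u + l *\<^sub>R y" "- blinfun_apply (T - T0) x"] by simp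
  also have "\<dots> \<le> norm (T + \<mu> *\<^sub>R S)" by (rule norm_blinfun_apply_unit_ball[OF x])
  finally have upper: "norm (u + l *\<^sub>R y) - \<delta> \<le> norm (T + \<mu> *\<^sub>R S)" .
  have "\<bar>\<mu>\<bar> * (1 - \<delta>) \<le> \<bar>l\<bar>" unfolding l_def abs_mult using s by (simp add: mult_left_mono)
  then have "(1 - \<delta>) * ((1 - 2 * \<delta>) + \<bar>\<mu>\<bar> * (1 - \<delta>)) \<le> (1 - \<delta>) * (norm u + \<bar>l\<bar>)"
    using large \<delta> by (intro mult_left_mono) (auto simp: u_def)
  also have "\<dots> \<le> norm (u + l *\<^sub>R y)" using oct by (simp add: u_def)
  finally have lower: "(1 - \<delta>) * ((1 - 2 * \<delta>) + \<bar>\<mu>\<bar> * (1 - \<delta>)) \<le> norm (u + l *\<^sub>R y)" .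
  have "(1 - \<delta>) * ((1 - 2 * \<delta>) + \<bar>\<mu>\<bar> * (1 - \<delta>)) - \<delta> - (1 - 4 * \<delta>) * (1 + \<bar>\<mu>\<bar>)
      = 2 * \<delta>\<^sup>2 + \<bar>\<mu>\<bar> * (2 * \<delta> + \<delta>\<^sup>2)"
    by (simp add: algebra_simps power2_eq_square)
  also have "\<dots> \<ge> 0" using \<delta> by simp
  finally show ?thesis using upper lower by linarith
qed

text \<open>The core construction: a finite \<delta>-net of the unit sphere of E, test points for the
  net taken from a slice of f, and a vector y that is octahedral for the (finitely many) values
  at the test points; the rank-one operator f \<otimes> y is then almost orthogonal to E in the
  l1 sense.\<close>
lemma rank_one_octahedral_witness:
  fixes f :: "'a::real_normed_vector \<Rightarrow>\<^sub>L real" and B :: "('a \<Rightarrow>\<^sub>L 'b::real_normed_vector) set"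
  assumes oct: "octahedral_on (UNIV :: 'b set)" and nf: "norm f = 1"
    and idx: "numerical_index_at f = 1" and finB: "finite B" and \<delta>: "0 < \<delta>" "\<delta> \<le> 1 / 4"
  shows "\<exists>y. norm y = 1 \<and> (\<forall>T\<in>span B. norm T = 1 \<longrightarrow>
           (\<forall>\<mu>. (1 - 4 * \<delta>) * (1 + \<bar>\<mu>\<bar>) \<le> norm (T + \<mu> *\<^sub>R rank_one f y)))"
proof -
  obtain K where K: "compact K" "{T \<in> span B. norm T \<le> 1} \<subseteq> K"
    using span_unit_ball_in_compact[OF finB] by blast
  have cover: "K \<subseteq> (\<Union>T0\<in>K. ball T0 \<delta>)" using centre_in_ball \<delta>(1) by blast
  obtain net where net: "finite net" "K \<subseteq> (\<Union>T0\<in>net. ball T0 \<delta>)"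
    using compactE_image[OF K(1) open_ball cover] by metis
  have "\<forall>T::'a \<Rightarrow>\<^sub>L 'b. \<exists>x. x \<in> slice f \<delta> \<and> norm T - \<delta> < norm (blinfun_apply T x)"
    using operator_large_on_slice[OF nf idx \<delta>(1)] by blast
  then obtain test where test: "\<And>T::'a \<Rightarrow>\<^sub>L 'b. test T \<in> slice f \<delta>
      \<and> norm T - \<delta> < norm (blinfun_apply T (test T))"
    by metis
  define F where "F = span ((\<lambda>T0. blinfun_apply T0 (test T0)) ` net)"
  have "\<exists>y\<in>UNIV. norm y = 1 \<and> (\<forall>u\<in>F. \<forall>l. (1 - \<delta>) * (norm u + \<bar>l\<bar>) \<le> norm (u + l *\<^sub>R y))"
    unfolding F_def using net(1) by (intro octahedral_onD[OF oct _ _ \<delta>(1)]) auto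
  then obtain y where y: "norm y = 1"
    and yoct: "\<And>u l. u \<in> F \<Longrightarrow> (1 - \<delta>) * (norm u + \<bar>l\<bar>) \<le> norm (u + l *\<^sub>R y)"
    by blast
  have bound: "(1 - 4 * \<delta>) * (1 + \<bar>\<mu>\<bar>) \<le> norm (T + \<mu> *\<^sub>R rank_one f y)"
    if T: "T \<in> span B" "norm T = 1" for T \<mu>
  proof -
    have "T \<in> {T \<in> span B. norm T \<le> 1}" using T by simp
    then have "T \<in> (\<Union>T0\<in>net. ball T0 \<delta>)" using K(2) net(2) by (meson subsetD)
    then obtain T0 where T0: "T0 \<in> net" "dist T0 T < \<delta>" by (auto simp: ball_def)
    then have close: "norm (T - T0) < \<delta>" by (simp add: dist_norm norm_minus_commute)
    define x where "x = test T0"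
    have x: "norm x \<le> 1" "1 - \<delta> < blinfun_apply f x" "norm T0 - \<delta> < norm (blinfun_apply T0 x)"
      using test[of T0] unfolding x_def slice_def by auto
    have "1 - \<delta> \<le> norm T0" using close T(2) norm_triangle_ineq2[of T T0] by simp
    then have large: "1 - 2 * \<delta> \<le> norm (blinfun_apply T0 x)" using x(3) by simp
    have "blinfun_apply T0 x \<in> F" unfolding F_def x_def using T0(1) by (auto intro: span_base)
    then have oct_at: "(1 - \<delta>) * (norm (blinfun_apply T0 x) + \<bar>l\<bar>)
        \<le> norm (blinfun_apply T0 x + l *\<^sub>R y)" for l
      by (rule yoct)
    have s: "1 - \<delta> \<le> \<bar>blinfun_apply f x\<bar>" using x(2) by simp
    show ?thesis
      using \<delta> by (intro norm_lower_bound_at_test_point[OF x(1) close large rank_one_apply s oct_at]) auto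
  qed
  show ?thesis
    by (intro exI[of _ y] conjI ballI impI allI y bound)
qed

theorem mainTheorem4:
  fixes f :: "'a::banach \<Rightarrow>\<^sub>L real"
    and H :: "('a \<Rightarrow>\<^sub>L 'b::banach) set"
  assumes "octahedral_on (UNIV :: 'b set)"
    and "norm f = 1"
    and "numerical_index_at f = 1"
    and "subspace H" and "closed H"
    and "(tensor_ops :: ('a \<Rightarrow>\<^sub>L 'b) set) \<subseteq> H"
  shows "octahedral_on H"
proof (rule octahedral_onI_unit_sphere)
  fix E and eps :: real assume "subspace E" "E \<subseteq> H" "\<exists>B. finite B \<and> E = span B" "eps > 0"
  then obtain B where B: "finite B" "E = span B" by blast
  define \<delta> where "\<delta> = min (eps / 4) (1 / 4)"
  have \<delta>: "0 < \<delta>" "\<delta> \<le> 1 / 4" "1 - eps \<le> 1 - 4 * \<delta>"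
    using \<open>eps > 0\<close> by (auto simp: \<delta>_def)
  obtain y where y: "norm y = 1" and witness: "\<And>T \<mu>. T \<in> span B \<Longrightarrow> norm T = 1 \<Longrightarrow>
      (1 - 4 * \<delta>) * (1 + \<bar>\<mu>\<bar>) \<le> norm (T + \<mu> *\<^sub>R rank_one f y)"
    using rank_one_octahedral_witness[OF assms(1-3) B(1) \<delta>(1,2)] by blast
  have "rank_one f y \<in> H"
    using assms(6) unfolding tensor_ops_def by (auto intro: span_base)
  moreover have "norm (rank_one f y) = 1"
    using y assms(2) by (simp add: norm_rank_one)
  moreover have "(1 - eps) * (1 + \<bar>\<mu>\<bar>) \<le> norm (T + \<mu> *\<^sub>R rank_one f y)"
    if "T \<in> E" "norm T = 1" for T \<mu>
    using witness[of T \<mu>] that B(2) \<delta>(3) mult_right_mono[of "1 - eps" "1 - 4 * \<delta>" "1 + \<bar>\<mu>\<bar>"]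
    by simp
  ultimately show "\<exists>S\<in>H. norm S = 1 \<and> (\<forall>T\<in>E. norm T = 1 \<longrightarrow>
      (\<forall>\<mu>. (1 - eps) * (1 + \<bar>\<mu>\<bar>) \<le> norm (T + \<mu> *\<^sub>R S)))"
    by (intro bexI[of _ "rank_one f y"] conjI ballI impI allI)
qed

end
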